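(* Let $d\ge1$, $p>0$, $\alpha\in(0,2)$, $T>0$, and let $\sigma,Q(\cdot\mid u),M,Q$ be as in the context. Let $T_1$ be uniform on $(0,T)$, $E_1$ standard exponential, $U_1$ uniform on $(0,1)$ and $V_1$ a random vector with law $Q/\|\sigma\|$, all independent. For $s>0$ set $$H(s;(V_1,E_1,U_1)):=\left(\left(\frac{\alpha s}{\|\sigma\|T}\right)^{-1/\alpha}\wedge\frac{E_1^{1/p}U_1^{1/\alpha}}{\|V_1\|^{1/p}}\right)\frac{V_1}{\|V_1\|}.$$ Then for every $t\in[0,T]$ and every Borel set $A\subset\mathbb{R}^d$ with $0\notin \overline{A}$, $$\int_0^\infty\mathbb{P}\Bigl[\mathbf{1}_{(0,t]}(T_1)\,H(s;(V_1,E_1,U_1))\in A\Bigr]\,ds=t\,M(A).$$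
   Context: $\mathbb{S}^{d-1}$ is the unit sphere in $\mathbb{R}^d$; $\sigma$ is a finite nonzero Borel measure on it with $\|\sigma\|:=\sigma(\mathbb{S}^{d-1})$; $\{Q(\cdot\mid u)\}_{u\in\mathbb{S}^{d-1}}$ is a measurable family of Borel probability measures on $(0,\infty)$ and $q(r,u):=\int_{(0,\infty)}e^{-rs}Q(ds\mid u)$. The Lévy measure is $M(A):=\int_{\mathbb{S}^{d-1}}\int_0^\infty\mathbf{1}_A(ru)\,q(r^p,u)\,r^{-\alpha-1}\,dr\,\sigma(du)$, and $Q(A):=\int_{\mathbb{S}^{d-1}}\int_{(0,\infty)}\mathbf{1}_A(su)\,Q(ds\mid u)\,\sigma(du)$ for Borel $A\subset\mathbb{R}^d$. *)

theory Defs
  imports "HOL-Probability.Probability"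
begin

definition qlap :: "('a \<Rightarrow> real measure) \<Rightarrow> real \<Rightarrow> 'a \<Rightarrow> real" where
  "qlap Qk r u = (\<integral>s. exp (- r * s) \<partial>(Qk u))"

definition levyM :: "'a::euclidean_space measure \<Rightarrow> ('a \<Rightarrow> real measure) \<Rightarrow> real \<Rightarrow> real \<Rightarrow> 'a set \<Rightarrow> ennreal" where
  "levyM \<sigma> Qk p \<alpha> A =
     (\<integral>\<^sup>+ u. (\<integral>\<^sup>+ r\<in>{0<..}. indicator A (r *\<^sub>R u) * ennreal (qlap Qk (r powr p) u * r powr (- \<alpha> - 1)) \<partial>lborel) \<partial>\<sigma>)"

definition Qfun :: "'a::euclidean_space measure \<Rightarrow> ('a \<Rightarrow> real measure) \<Rightarrow> 'a set \<Rightarrow> ennreal" where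
  "Qfun \<sigma> Qk A = (\<integral>\<^sup>+ u. (\<integral>\<^sup>+ s. indicator A (s *\<^sub>R u) \<partial>(Qk u)) \<partial>\<sigma>)"

definition Qnormalized :: "'a::euclidean_space measure \<Rightarrow> ('a \<Rightarrow> real measure) \<Rightarrow> 'a measure" where
  "Qnormalized \<sigma> Qk = measure_of UNIV (sets borel) (\<lambda>A. Qfun \<sigma> Qk A / ennreal (measure \<sigma> (space \<sigma>)))"

definition Hfun :: "real \<Rightarrow> real \<Rightarrow> real \<Rightarrow> real \<Rightarrow> real \<Rightarrow> 'a::euclidean_space \<Rightarrow> real \<Rightarrow> real \<Rightarrow> 'a" where
  "Hfun \<alpha> p T normsig s v e u =
     (min ((\<alpha> * s / (normsig * T)) powr (- 1 / \<alpha>))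
          (e powr (1 / p) * u powr (1 / \<alpha>) / norm v powr (1 / p))) *\<^sub>R (v /\<^sub>R norm v)"

end

theory Submission
  imports Defs
begin

text \<open>
  Write \<open>R(s) = (\<alpha> s / (\<parallel>\<sigma>\<parallel> T)) powr (-1/\<alpha>)\<close> for the radius of the series representation; it
  is the inverse of the tail \<open>r \<mapsto> \<parallel>\<sigma>\<parallel> T r powr -\<alpha> / \<alpha>\<close> of the measure \<open>\<parallel>\<sigma>\<parallel> T r powr (-\<alpha>-1) dr\<close>,
  so it carries Lebesgue measure on \<open>(0,\<infinity>)\<close> to that measure.  The truncation
  \<open>E\<^sub>1 powr (1/p) U\<^sub>1 powr (1/\<alpha>) / \<parallel>V\<^sub>1\<parallel> powr (1/p)\<close> is itself a value \<open>R(a(E\<^sub>1)/U\<^sub>1)\<close>, where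
  \<open>R(a(e)) = (e / \<parallel>V\<^sub>1\<parallel>) powr (1/p)\<close>, so
  \<open>H(s) = R(max s (a(E\<^sub>1)/U\<^sub>1))\<close> in the direction of \<open>V\<^sub>1\<close>.

  By Tonelli and independence the left-hand side is \<open>t/T\<close> times the average over \<open>V\<^sub>1, E\<^sub>1, U\<^sub>1\<close> of
  \<open>\<integral>\<^sub>0\<^sup>\<infinity> 1\<^sub>A(H(s)) ds\<close>.  Averaging over the uniform \<open>U\<^sub>1\<close> turns this into \<open>\<integral> 1\<^sub>A(R(s) V\<^sub>1/\<parallel>V\<^sub>1\<parallel>) ds\<close>
  over \<open>s > a(E\<^sub>1)\<close> (the atom of \<open>max s (a/U\<^sub>1)\<close> at \<open>a/U\<^sub>1\<close> contributes exactly the weight \<open>a/s\<close>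
  that the tail \<open>s > a/U\<^sub>1\<close> misses),
  and averaging over the exponential \<open>E\<^sub>1\<close> weights \<open>s\<close> by \<open>\<P>(a(E\<^sub>1) < s) = exp (-\<parallel>V\<^sub>1\<parallel> R(s) powr p)\<close>.
  Substituting \<open>r = R(s)\<close> and writing \<open>V\<^sub>1 = s u\<close> with \<open>s \<sim> Q(\<cdot>|u)\<close>, the average over \<open>s\<close> of
  \<open>exp (-s r powr p)\<close> is the Laplace transform \<open>q(r powr p, u)\<close> in the definition of \<open>M\<close>.
\<close>

section \<open>Substitutions on the half-line\<close>

lemma nn_integral_exp_substitution:
  fixes f :: "real \<Rightarrow> ennreal"
  assumes [measurable]: "f \<in> borel_measurable borel"
  shows "(\<integral>\<^sup>+x. f x * indicator {0<..} x \<partial>lborel) = (\<integral>\<^sup>+y. f (exp y) * ennreal (exp y) \<partial>lborel)"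
proof -
  define F where "F n x = f x * indicator {exp (- real n)..exp (real n)} x" for n x
  define G where "G n y = f (exp y) * ennreal (exp y) * indicator {- real n..real n} y" for n y
  have "integral\<^sup>N lborel (F n) = integral\<^sup>N lborel (G n)" for n
    unfolding F_def G_def
    by (cases "n = 0") (auto intro!: nn_integral_substitution_aux derivative_eq_intros continuous_intros)
  moreover have "incseq F" "incseq G"
  proof -
    have "x \<in> {exp (- real n)..exp (real n)}"
      if "m \<le> n" "x \<in> {exp (- real m)..exp (real m)}" for m n x
      using that order_trans[of "exp (- real n)" "exp (- real m)" x] order_trans[of x "exp (real m)" "exp (real n)"]
      by auto
    then show "incseq F" "incseq G"
      unfolding F_def G_def incseq_def le_fun_def
      by (auto intro!: mult_left_mono indicator_leI)
  qed
  moreover have "(SUP n. F n x) = f x * indicator {0<..} x" for x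
  proof (cases "x > 0")
    case True
    obtain N :: nat where "\<bar>ln x\<bar> \<le> real N" using real_arch_simple by blast
    then have "exp (- real N) \<le> exp (ln x)" "exp (ln x) \<le> exp (real N)"
      by auto
    then have "x \<in> {exp (- real N)..exp (real N)}"
      using True by simp
    then show ?thesis
      by (intro antisym SUP_least SUP_upper2[of N]) (auto simp: F_def True split: split_indicator)
  next
    case False
    then have "x \<notin> {exp (- real n)..exp (real n)}" for n
      by (metis atLeastAtMost_iff exp_gt_zero less_le_trans)
    then show ?thesis using False by (simp add: F_def)
  qed
  moreover have "(SUP n. G n y) = f (exp y) * ennreal (exp y)" for y
  proof -
    obtain N :: nat where "\<bar>y\<bar> \<le> real N" using real_arch_simple by blast
    then show ?thesis
      by (intro antisym SUP_least SUP_upper2[of N]) (auto simp: G_def split: split_indicator)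
  qed
  moreover have "F n \<in> borel_measurable lborel" "G n \<in> borel_measurable lborel" for n
    unfolding F_def G_def by measurable
  ultimately show ?thesis
    using nn_integral_monotone_convergence_SUP[of F lborel] nn_integral_monotone_convergence_SUP[of G lborel]
    by simp
qed

lemma nn_integral_powr_substitution:
  fixes f :: "real \<Rightarrow> ennreal"
  assumes [measurable]: "f \<in> borel_measurable borel" and "k > 0" "\<beta> \<noteq> 0"
  shows "(\<integral>\<^sup>+x. f x * indicator {0<..} x \<partial>lborel)
       = (\<integral>\<^sup>+y. f (k * y powr \<beta>) * ennreal (\<bar>\<beta>\<bar> * k * y powr (\<beta> - 1)) * indicator {0<..} y \<partial>lborel)"
proof -
  have exp_affine: "exp (ln k + \<beta> * z) = k * exp z powr \<beta>" for z
    using \<open>k > 0\<close> by (simp add: exp_add powr_def mult.commute)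
  have "(\<integral>\<^sup>+x. f x * indicator {0<..} x \<partial>lborel) = (\<integral>\<^sup>+t. f (exp t) * ennreal (exp t) \<partial>lborel)"
    by (rule nn_integral_exp_substitution) measurable
  also have "\<dots> = \<bar>\<beta>\<bar> * (\<integral>\<^sup>+z. f (exp (ln k + \<beta> * z)) * ennreal (exp (ln k + \<beta> * z)) \<partial>lborel)"
    using \<open>\<beta> \<noteq> 0\<close> by (rule nn_integral_real_affine[rotated]) measurable
  also have "\<dots> = (\<integral>\<^sup>+z. f (k * exp z powr \<beta>) * ennreal (\<bar>\<beta>\<bar> * k * exp z powr (\<beta> - 1)) * ennreal (exp z) \<partial>lborel)"
  proof (subst nn_integral_cmult[symmetric], measurable, intro nn_integral_cong)
    fix z :: real
    have "ennreal \<bar>\<beta>\<bar> * ennreal (k * exp z powr \<beta>)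
        = ennreal (\<bar>\<beta>\<bar> * k * exp z powr (\<beta> - 1)) * ennreal (exp z)"
      using \<open>k > 0\<close> by (simp add: ennreal_mult[symmetric] powr_diff)
    then show "ennreal \<bar>\<beta>\<bar> * (f (exp (ln k + \<beta> * z)) * ennreal (exp (ln k + \<beta> * z)))
        = f (k * exp z powr \<beta>) * ennreal (\<bar>\<beta>\<bar> * k * exp z powr (\<beta> - 1)) * ennreal (exp z)"
      by (simp add: exp_affine) (metis mult.assoc mult.commute)
  qed
  also have "\<dots> = (\<integral>\<^sup>+y. f (k * y powr \<beta>) * ennreal (\<bar>\<beta>\<bar> * k * y powr (\<beta> - 1)) * indicator {0<..} y \<partial>lborel)"
    by (rule nn_integral_exp_substitution[symmetric]) measurable
  finally show ?thesis .
qed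

lemma nn_integral_max_const:
  fixes f :: "real \<Rightarrow> ennreal"
  assumes [measurable]: "f \<in> borel_measurable borel" and "b > 0"
  shows "(\<integral>\<^sup>+s. f (max s b) * indicator {0<..} s \<partial>lborel)
       = ennreal b * f b + (\<integral>\<^sup>+s. f s * indicator {b<..} s \<partial>lborel)"
proof -
  have "(\<integral>\<^sup>+s. f (max s b) * indicator {0<..} s \<partial>lborel)
     = (\<integral>\<^sup>+s. f b * indicator {0<..b} s + f s * indicator {b<..} s \<partial>lborel)"
    using \<open>b > 0\<close> by (intro nn_integral_cong) (auto split: split_indicator simp: max_def)
  also have "\<dots> = ennreal b * f b + (\<integral>\<^sup>+s. f s * indicator {b<..} s \<partial>lborel)"
    using \<open>b > 0\<close> by (subst nn_integral_add) (auto simp: nn_integral_cmult_indicator mult.commute)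
  finally show ?thesis .
qed

lemma pred_in_greaterThan[measurable (raw)]:
  fixes f g :: "'a \<Rightarrow> 'b::{linorder_topology, second_countable_topology}"
  shows "f \<in> borel_measurable M \<Longrightarrow> g \<in> borel_measurable M \<Longrightarrow> Measurable.pred M (\<lambda>x. f x \<in> {g x<..})"
  by simp

lemma pred_in_greaterThanLessThan[measurable (raw)]:
  fixes f g h :: "'a \<Rightarrow> 'b::{linorder_topology, second_countable_topology}"
  shows "f \<in> borel_measurable M \<Longrightarrow> g \<in> borel_measurable M \<Longrightarrow> h \<in> borel_measurable M \<Longrightarrow>
    Measurable.pred M (\<lambda>x. f x \<in> {g x<..<h x})"
  by simp

lemma nn_integral_unit_interval_reciprocal:
  fixes f :: "real \<Rightarrow> ennreal"
  assumes [measurable]: "f \<in> borel_measurable borel" and "a > 0"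
  shows "(\<integral>\<^sup>+u. indicator {0<..<1} u * (ennreal (a / u) * f (a / u)) \<partial>lborel)
       = (\<integral>\<^sup>+s. f s * indicator {a<..} s * ennreal (a / s) \<partial>lborel)"
proof -
  have "(\<integral>\<^sup>+s. f s * indicator {a<..} s * ennreal (a / s) \<partial>lborel)
      = (\<integral>\<^sup>+s. (f s * indicator {a<..} s * ennreal (a / s)) * indicator {0<..} s \<partial>lborel)"
    using \<open>a > 0\<close> by (intro nn_integral_cong) (auto split: split_indicator)
  also have "\<dots> = (\<integral>\<^sup>+u. (f (a * u powr -1) * indicator {a<..} (a * u powr -1) * ennreal (a / (a * u powr -1)))
      * ennreal (\<bar>-1\<bar> * a * u powr (-1 - 1)) * indicator {0<..} u \<partial>lborel)"
    using \<open>a > 0\<close> by (intro nn_integral_powr_substitution) auto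
  also have "\<dots> = (\<integral>\<^sup>+u. indicator {0<..<1} u * (ennreal (a / u) * f (a / u)) \<partial>lborel)"
  proof (intro nn_integral_cong)
    fix u :: real
    show "(f (a * u powr -1) * indicator {a<..} (a * u powr -1) * ennreal (a / (a * u powr -1)))
        * ennreal (\<bar>-1\<bar> * a * u powr (-1 - 1)) * indicator {0<..} u
        = indicator {0<..<1} u * (ennreal (a / u) * f (a / u))"
    proof (cases "0 < u")
      case True
      have "ennreal (a / (a * u powr -1)) * ennreal (\<bar>-1\<bar> * a * u powr (-1 - 1)) = ennreal (a / u)"
        using True \<open>a > 0\<close>
        by (simp add: ennreal_mult[symmetric] powr_minus powr_add[symmetric] field_simps power2_eq_square)
      moreover have "a < a * u powr -1 \<longleftrightarrow> u < 1"
        using True \<open>a > 0\<close> by (simp add: powr_minus field_simps)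
      ultimately show ?thesis
        using True by (auto simp: powr_minus divide_inverse split: split_indicator) (metis mult.assoc mult.commute)
    qed simp
  qed
  finally show ?thesis ..
qed

lemma nn_integral_unit_interval_threshold:
  fixes f :: "real \<Rightarrow> ennreal"
  assumes [measurable]: "f \<in> borel_measurable borel" and "a > 0"
  shows "(\<integral>\<^sup>+u. (\<integral>\<^sup>+s. indicator {0<..<1} u * (f s * indicator {a / u<..} s) \<partial>lborel) \<partial>lborel)
       = (\<integral>\<^sup>+s. f s * indicator {a<..} s * ennreal (1 - a / s) \<partial>lborel)"
proof -
  have "u \<in> {0<..<1} \<and> a / u < s \<longleftrightarrow> a < s \<and> u \<in> {a / s<..<1}" for s u
  proof
    assume u: "u \<in> {0<..<1} \<and> a / u < s"
    then have "a < a / u" using \<open>a > 0\<close> by (simp add: field_simps)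
    with u have "a < s" by simp
    moreover have "a < s * u" using u by (auto simp: pos_divide_less_eq)
    ultimately show "a < s \<and> u \<in> {a / s<..<1}" using u \<open>a > 0\<close> by (simp add: field_simps)
  next
    assume s: "a < s \<and> u \<in> {a / s<..<1}"
    moreover from s have "0 < s" using \<open>a > 0\<close> by simp
    ultimately have "0 < u" using \<open>a > 0\<close> by (metis divide_pos_pos greaterThanLessThan_iff less_trans)
    with s \<open>0 < s\<close> show "u \<in> {0<..<1} \<and> a / u < s" by (auto simp: pos_divide_less_eq mult.commute)
  qed
  then have slice: "indicator {0<..<1} u * (f s * indicator {a / u<..} s)
      = (f s * indicator {a<..} s) * indicator {a / s<..<1} u" for s u :: real
    by (auto split: split_indicator)
  have "(\<integral>\<^sup>+u. (\<integral>\<^sup>+s. indicator {0<..<1} u * (f s * indicator {a / u<..} s) \<partial>lborel) \<partial>lborel)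
      = (\<integral>\<^sup>+s. (\<integral>\<^sup>+u. (f s * indicator {a<..} s) * indicator {a / s<..<1} u \<partial>lborel) \<partial>lborel)"
    unfolding slice by (rule lborel_pair.Fubini') measurable
  also have "\<dots> = (\<integral>\<^sup>+s. f s * indicator {a<..} s * ennreal (1 - a / s) \<partial>lborel)"
    using \<open>a > 0\<close> by (intro nn_integral_cong) (auto simp: nn_integral_cmult_indicator split: split_indicator)
  finally show ?thesis .
qed

lemma nn_integral_unit_interval_max:
  fixes f :: "real \<Rightarrow> ennreal"
  assumes [measurable]: "f \<in> borel_measurable borel" and "a > 0"
  shows "(\<integral>\<^sup>+u. indicator {0<..<1} u * (\<integral>\<^sup>+s. f (max s (a / u)) * indicator {0<..} s \<partial>lborel) \<partial>lborel)
       = (\<integral>\<^sup>+s. f s * indicator {a<..} s \<partial>lborel)"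
proof -
  have "indicator {0<..<1} u * (\<integral>\<^sup>+s. f (max s (a / u)) * indicator {0<..} s \<partial>lborel)
      = indicator {0<..<1} u * (ennreal (a / u) * f (a / u))
          + (\<integral>\<^sup>+s. indicator {0<..<1} u * (f s * indicator {a / u<..} s) \<partial>lborel)" for u
    using \<open>a > 0\<close> by (cases "u \<in> {0<..<1}") (simp_all add: nn_integral_max_const)
  then have "(\<integral>\<^sup>+u. indicator {0<..<1} u * (\<integral>\<^sup>+s. f (max s (a / u)) * indicator {0<..} s \<partial>lborel) \<partial>lborel)
      = (\<integral>\<^sup>+u. indicator {0<..<1} u * (ennreal (a / u) * f (a / u))
          + (\<integral>\<^sup>+s. indicator {0<..<1} u * (f s * indicator {a / u<..} s) \<partial>lborel) \<partial>lborel)"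
    by simp
  also have "\<dots> = (\<integral>\<^sup>+u. indicator {0<..<1} u * (ennreal (a / u) * f (a / u)) \<partial>lborel)
      + (\<integral>\<^sup>+u. (\<integral>\<^sup>+s. indicator {0<..<1} u * (f s * indicator {a / u<..} s) \<partial>lborel) \<partial>lborel)"
    by (rule nn_integral_add) measurable
  also have "\<dots> = (\<integral>\<^sup>+s. f s * indicator {a<..} s * ennreal (a / s) + f s * indicator {a<..} s * ennreal (1 - a / s) \<partial>lborel)"
    unfolding nn_integral_unit_interval_reciprocal[OF assms] nn_integral_unit_interval_threshold[OF assms]
    by (rule nn_integral_add[symmetric]) measurable
  also have "\<dots> = (\<integral>\<^sup>+s. f s * indicator {a<..} s \<partial>lborel)"
  proof (intro nn_integral_cong)
    fix s :: real
    have "a < s \<Longrightarrow> ennreal (a / s) + ennreal (1 - a / s) = 1"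
      using \<open>a > 0\<close> by (subst ennreal_plus[symmetric]) auto
    then show "f s * indicator {a<..} s * ennreal (a / s) + f s * indicator {a<..} s * ennreal (1 - a / s)
        = f s * indicator {a<..} s"
      by (auto simp: distrib_left[symmetric] split: split_indicator)
  qed
  finally show ?thesis .
qed

section \<open>The radius function of the series representation\<close>

lemma less_powr_inverse_iff:
  fixes x y p :: real
  assumes "0 < x" "0 < y" "0 < p"
  shows "x < y powr (1 / p) \<longleftrightarrow> x powr p < y"
proof
  assume "x < y powr (1 / p)"
  then have "x powr p < (y powr (1 / p)) powr p"
    using assms by (intro powr_less_mono2) auto
  then show "x powr p < y" using assms by (simp add: powr_powr)
next
  assume "x powr p < y"
  then have "(x powr p) powr (1 / p) < y powr (1 / p)"
    using assms by (intro powr_less_mono2) auto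
  then show "x < y powr (1 / p)" using assms by (simp add: powr_powr)
qed

text \<open>\<open>stable_tail \<alpha> c r\<close> is the mass \<open>\<integral>\<^sub>r\<^sup>\<infinity> c \<rho> powr (-\<alpha>-1) d\<rho>\<close>; its inverse \<open>stable_tail_inv\<close> is the
  radius appearing in \<open>Hfun\<close> with \<open>c = \<parallel>\<sigma>\<parallel> T\<close>.\<close>

definition stable_tail :: "real \<Rightarrow> real \<Rightarrow> real \<Rightarrow> real" where
  "stable_tail \<alpha> c r = c / \<alpha> * r powr - \<alpha>"

definition stable_tail_inv :: "real \<Rightarrow> real \<Rightarrow> real \<Rightarrow> real" where
  "stable_tail_inv \<alpha> c s = (\<alpha> * s / c) powr (- 1 / \<alpha>)"

context
  fixes \<alpha> c :: real
  assumes \<alpha>: "\<alpha> > 0" and c: "c > 0"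
begin

lemma stable_tail_pos: "r > 0 \<Longrightarrow> stable_tail \<alpha> c r > 0"
  using \<alpha> c by (simp add: stable_tail_def)

lemma stable_tail_inv_stable_tail: "r > 0 \<Longrightarrow> stable_tail_inv \<alpha> c (stable_tail \<alpha> c r) = r"
  using \<alpha> c by (simp add: stable_tail_def stable_tail_inv_def powr_powr)

lemma stable_tail_inv_less_iff:
  "s > 0 \<Longrightarrow> x > 0 \<Longrightarrow> stable_tail_inv \<alpha> c s < stable_tail_inv \<alpha> c x \<longleftrightarrow> x < s"
proof -
  have anti: "stable_tail_inv \<alpha> c b < stable_tail_inv \<alpha> c a" if "0 < a" "a < b" for a b
  proof -
    have "\<alpha> * a / c < \<alpha> * b / c"
      using \<alpha> c that by (simp add: divide_strict_right_mono)
    then show ?thesis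
      unfolding stable_tail_inv_def using \<alpha> c that by (intro powr_less_mono2_neg) auto
  qed
  assume "s > 0" "x > 0"
  then show ?thesis
    using anti[of x s] anti[of s x] by (cases x s rule: linorder_cases) auto
qed

lemma stable_tail_less_iff:
  "r > 0 \<Longrightarrow> s > 0 \<Longrightarrow> stable_tail \<alpha> c r < s \<longleftrightarrow> stable_tail_inv \<alpha> c s < r"
  using stable_tail_inv_less_iff[of s "stable_tail \<alpha> c r"]
  by (simp add: stable_tail_pos stable_tail_inv_stable_tail)

lemma min_stable_tail_inv:
  "s > 0 \<Longrightarrow> x > 0 \<Longrightarrow>
    min (stable_tail_inv \<alpha> c s) (stable_tail_inv \<alpha> c x) = stable_tail_inv \<alpha> c (max s x)"
  using stable_tail_inv_less_iff[of s x] stable_tail_inv_less_iff[of x s]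
  by (auto simp: min_def max_def)

lemma stable_tail_mult_powr:
  "\<rho> > 0 \<Longrightarrow> u > 0 \<Longrightarrow> stable_tail \<alpha> c (\<rho> * u powr (1 / \<alpha>)) = stable_tail \<alpha> c \<rho> / u"
  using \<alpha> by (simp add: stable_tail_def powr_mult powr_powr powr_minus divide_inverse)

lemma stable_tail_less_iff_powr:
  assumes "e > 0" "S > 0" "p > 0"
  shows "stable_tail \<alpha> c ((e / S) powr (1 / p)) < s \<longleftrightarrow> s > 0 \<and> S * stable_tail_inv \<alpha> c s powr p < e"
proof (cases "s > 0")
  case True
  then have "stable_tail_inv \<alpha> c s > 0"
    using \<alpha> c by (simp add: stable_tail_inv_def)
  with True assms show ?thesis
    by (simp add: stable_tail_less_iff less_powr_inverse_iff pos_less_divide_eq mult.commute)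
next
  case False
  then show ?thesis
    using assms stable_tail_pos[of "(e / S) powr (1 / p)"] by auto
qed

lemma nn_integral_stable_tail_inv:
  fixes h :: "real \<Rightarrow> ennreal"
  assumes [measurable]: "h \<in> borel_measurable borel"
  shows "(\<integral>\<^sup>+s. h (stable_tail_inv \<alpha> c s) * indicator {0<..} s \<partial>lborel)
       = (\<integral>\<^sup>+r. h r * ennreal (c * r powr (- \<alpha> - 1)) * indicator {0<..} r \<partial>lborel)"
proof -
  have "(\<integral>\<^sup>+s. h (stable_tail_inv \<alpha> c s) * indicator {0<..} s \<partial>lborel)
      = (\<integral>\<^sup>+r. h (stable_tail_inv \<alpha> c (c / \<alpha> * r powr - \<alpha>))
          * ennreal (\<bar>- \<alpha>\<bar> * (c / \<alpha>) * r powr (- \<alpha> - 1)) * indicator {0<..} r \<partial>lborel)"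
    using \<alpha> c by (intro nn_integral_powr_substitution) (auto simp: stable_tail_inv_def)
  also have "\<dots> = (\<integral>\<^sup>+r. h r * ennreal (c * r powr (- \<alpha> - 1)) * indicator {0<..} r \<partial>lborel)"
    using \<alpha> stable_tail_inv_stable_tail
    by (intro nn_integral_cong) (auto simp: stable_tail_def split: split_indicator)
  finally show ?thesis .
qed

end

lemma Hfun_eq_stable_tail_inv:
  fixes v :: "'a::euclidean_space"
  assumes "v \<noteq> 0" "ns * T > 0" "\<alpha> > 0" "p > 0" "e > 0" "u > 0" "s > 0"
  shows "Hfun \<alpha> p T ns s v e u
    = stable_tail_inv \<alpha> (ns * T) (max s (stable_tail \<alpha> (ns * T) ((e / norm v) powr (1 / p)) / u))
        *\<^sub>R (v /\<^sub>R norm v)"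
proof -
  let ?\<rho> = "(e / norm v) powr (1 / p)"
  have "e powr (1 / p) * u powr (1 / \<alpha>) / norm v powr (1 / p) = stable_tail_inv \<alpha> (ns * T) (stable_tail \<alpha> (ns * T) ?\<rho> / u)"
    using assms by (simp add: stable_tail_inv_stable_tail flip: stable_tail_mult_powr) (simp add: powr_divide)
  moreover have "Hfun \<alpha> p T ns s v e u
      = min (stable_tail_inv \<alpha> (ns * T) s) (e powr (1 / p) * u powr (1 / \<alpha>) / norm v powr (1 / p))
          *\<^sub>R (v /\<^sub>R norm v)"
    by (simp add: Hfun_def stable_tail_inv_def)
  ultimately show ?thesis
    using assms by (simp add: min_stable_tail_inv stable_tail_pos)
qed

lemma nn_integral_Hfun_uniform:
  fixes v :: "'a::euclidean_space"
  assumes [measurable]: "A \<in> sets borel"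
    and "v \<noteq> 0" "ns * T > 0" "\<alpha> > 0" "p > 0" "e > 0"
  shows "(\<integral>\<^sup>+u. (\<integral>\<^sup>+s. indicator A (Hfun \<alpha> p T ns s v e u) * indicator {0<..} s \<partial>lborel)
            \<partial>uniform_measure lborel {0<..<1})
    = (\<integral>\<^sup>+s. indicator A (stable_tail_inv \<alpha> (ns * T) s *\<^sub>R (v /\<^sub>R norm v))
            * indicator {stable_tail \<alpha> (ns * T) ((e / norm v) powr (1 / p))<..} s \<partial>lborel)"
proof -
  define f where "f s = (indicator A (stable_tail_inv \<alpha> (ns * T) s *\<^sub>R (v /\<^sub>R norm v)) :: ennreal)" for s
  define a where "a = stable_tail \<alpha> (ns * T) ((e / norm v) powr (1 / p))"
  have [measurable]: "f \<in> borel_measurable borel"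
    unfolding f_def stable_tail_inv_def by measurable
  have "a > 0"
    using assms by (simp add: a_def stable_tail_pos)
  have "(\<integral>\<^sup>+s. indicator A (Hfun \<alpha> p T ns s v e u) * indicator {0<..} s \<partial>lborel) * indicator {0<..<1} u
      = indicator {0<..<1} u * (\<integral>\<^sup>+s. f (max s (a / u)) * indicator {0<..} s \<partial>lborel)" for u
    using assms
    by (cases "u \<in> {0<..<1}")
       (auto simp: Hfun_eq_stable_tail_inv f_def a_def mult.commute intro!: nn_integral_cong split: split_indicator)
  moreover have "(\<integral>\<^sup>+u. (\<integral>\<^sup>+s. indicator A (Hfun \<alpha> p T ns s v e u) * indicator {0<..} s \<partial>lborel)
            \<partial>uniform_measure lborel {0<..<1})
      = (\<integral>\<^sup>+u. (\<integral>\<^sup>+s. indicator A (Hfun \<alpha> p T ns s v e u) * indicator {0<..} s \<partial>lborel)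
            * indicator {0<..<1} u \<partial>lborel) / emeasure lborel {0<..<1::real}"
    by (rule nn_integral_uniform_measure) (unfold Hfun_def, measurable)
  ultimately have "(\<integral>\<^sup>+u. (\<integral>\<^sup>+s. indicator A (Hfun \<alpha> p T ns s v e u) * indicator {0<..} s \<partial>lborel)
            \<partial>uniform_measure lborel {0<..<1})
      = (\<integral>\<^sup>+u. indicator {0<..<1} u * (\<integral>\<^sup>+s. f (max s (a / u)) * indicator {0<..} s \<partial>lborel) \<partial>lborel)"
    by (simp add: divide_ennreal_def)
  also have "\<dots> = (\<integral>\<^sup>+s. f s * indicator {a<..} s \<partial>lborel)"
    using \<open>a > 0\<close> by (rule nn_integral_unit_interval_max[rotated]) measurable
  finally show ?thesis by (simp add: f_def a_def)
qed

lemma nn_integral_Hfun_fixed_vector: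
  fixes v :: "'a::euclidean_space" and E :: "real measure"
  assumes [measurable]: "A \<in> sets borel"
    and "v \<noteq> 0" "ns * T > 0" "\<alpha> > 0" "p > 0"
    and "prob_space E" and sets_E[measurable_cong]: "sets E = sets borel"
    and E_pos: "AE e in E. e > 0" and E_tail: "\<And>x. x \<ge> 0 \<Longrightarrow> emeasure E {x<..} = exp (- x)"
  shows "(\<integral>\<^sup>+e. (\<integral>\<^sup>+u. (\<integral>\<^sup>+s. indicator A (Hfun \<alpha> p T ns s v e u) * indicator {0<..} s \<partial>lborel)
            \<partial>uniform_measure lborel {0<..<1}) \<partial>E)
    = (\<integral>\<^sup>+r. indicator A (r *\<^sub>R (v /\<^sub>R norm v)) * ennreal (exp (- norm v * r powr p))
            * ennreal (ns * T * r powr (- \<alpha> - 1)) * indicator {0<..} r \<partial>lborel)"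
proof -
  interpret E: prob_space E by fact
  interpret pair_sigma_finite lborel E ..
  let ?R = "stable_tail_inv \<alpha> (ns * T)"
  define f where "f s = (indicator A (?R s *\<^sub>R (v /\<^sub>R norm v)) :: ennreal)" for s
  have [measurable]: "f \<in> borel_measurable borel"
    unfolding f_def stable_tail_inv_def by measurable
  have "AE e in E. (\<integral>\<^sup>+u. (\<integral>\<^sup>+s. indicator A (Hfun \<alpha> p T ns s v e u) * indicator {0<..} s \<partial>lborel)
            \<partial>uniform_measure lborel {0<..<1})
      = (\<integral>\<^sup>+s. f s * indicator {0<..} s * indicator {norm v * ?R s powr p<..} e \<partial>lborel)"
    using E_pos
  proof eventually_elim
    case (elim e)
    then have "indicator {stable_tail \<alpha> (ns * T) ((e / norm v) powr (1 / p))<..} s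
        = (indicator {0<..} s * indicator {norm v * ?R s powr p<..} e :: ennreal)" for s
      using stable_tail_less_iff_powr[of \<alpha> "ns * T" e "norm v" p s] assms by (simp split: split_indicator)
    with elim show ?case
      using assms by (simp add: nn_integral_Hfun_uniform f_def mult.assoc)
  qed
  then have "(\<integral>\<^sup>+e. (\<integral>\<^sup>+u. (\<integral>\<^sup>+s. indicator A (Hfun \<alpha> p T ns s v e u) * indicator {0<..} s \<partial>lborel)
            \<partial>uniform_measure lborel {0<..<1}) \<partial>E)
      = (\<integral>\<^sup>+e. (\<integral>\<^sup>+s. f s * indicator {0<..} s * indicator {norm v * ?R s powr p<..} e \<partial>lborel) \<partial>E)"
    by (rule nn_integral_cong_AE)
  also have "\<dots> = (\<integral>\<^sup>+s. (\<integral>\<^sup>+e. f s * indicator {0<..} s * indicator {norm v * ?R s powr p<..} e \<partial>E) \<partial>lborel)"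
    by (rule Fubini'[of "\<lambda>s e. f s * indicator {0<..} s * indicator {norm v * ?R s powr p<..} e"])
      (unfold stable_tail_inv_def, measurable)
  also have "\<dots> = (\<integral>\<^sup>+s. f s * ennreal (exp (- norm v * ?R s powr p)) * indicator {0<..} s \<partial>lborel)"
  proof (intro nn_integral_cong)
    fix s :: real
    have "(\<integral>\<^sup>+e. f s * indicator {0<..} s * indicator {norm v * ?R s powr p<..} e \<partial>E)
        = f s * indicator {0<..} s * emeasure E {norm v * ?R s powr p<..}"
      by (rule nn_integral_cmult_indicator) simp
    then show "(\<integral>\<^sup>+e. f s * indicator {0<..} s * indicator {norm v * ?R s powr p<..} e \<partial>E)
        = f s * ennreal (exp (- norm v * ?R s powr p)) * indicator {0<..} s"
      by (simp add: E_tail mult_ac)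
  qed
  also have "\<dots> = (\<integral>\<^sup>+r. indicator A (r *\<^sub>R (v /\<^sub>R norm v)) * ennreal (exp (- norm v * r powr p))
            * ennreal (ns * T * r powr (- \<alpha> - 1)) * indicator {0<..} r \<partial>lborel)"
    unfolding f_def using assms by (intro nn_integral_stable_tail_inv) measurable
  finally show ?thesis .
qed

section \<open>Independent random variables\<close>

lemma measurable_sigmaI:
  assumes "G \<subseteq> Pow \<Omega>" "f \<in> \<Omega> \<rightarrow> space N" "\<And>B. B \<in> sets N \<Longrightarrow> f -` B \<inter> \<Omega> \<in> sigma_sets \<Omega> G"
  shows "f \<in> sigma \<Omega> G \<rightarrow>\<^sub>M N"
  using assms by (intro measurableI) (auto simp: space_measure_of_conv sets_measure_of_conv)

lemma Int_stable_vimages: "Int_stable {X -` B \<inter> \<Omega> | B. B \<in> sets N}"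
proof (rule Int_stableI)
  fix a b assume "a \<in> {X -` B \<inter> \<Omega> | B. B \<in> sets N}" "b \<in> {X -` B \<inter> \<Omega> | B. B \<in> sets N}"
  then obtain A B where "a = X -` A \<inter> \<Omega>" "b = X -` B \<inter> \<Omega>" "A \<in> sets N" "B \<in> sets N" by auto
  then show "a \<inter> b \<in> {X -` B \<inter> \<Omega> | B. B \<in> sets N}"
    by (intro CollectI exI[of _ "A \<inter> B"]) auto
qed

lemma (in prob_space) indep_set_sigma_sets_UN:
  assumes indep: "indep_sets F K" and Int_stable: "\<And>i. i \<in> K \<Longrightarrow> Int_stable (F i)"
    and "k \<in> K" "J \<subseteq> K" "k \<notin> J"
  shows "indep_set (F k) (sigma_sets (space M) (\<Union>i\<in>J. F i))"
proof -
  define I where "I b = (if b then {k} else J)" for b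
  have "indep_sets (\<lambda>b. sigma_sets (space M) (\<Union>i\<in>I b. F i)) UNIV"
  proof (rule indep_sets_collect_sigma)
    show "indep_sets F (\<Union>b. I b)"
      using \<open>k \<in> K\<close> \<open>J \<subseteq> K\<close> by (intro indep_sets_mono_index[OF _ indep]) (auto simp: I_def)
  qed (use Int_stable \<open>k \<in> K\<close> \<open>J \<subseteq> K\<close> \<open>k \<notin> J\<close> in \<open>auto simp: I_def disjoint_family_on_def split: if_splits\<close>)
  then show ?thesis
    unfolding indep_set_def
    by (rule indep_sets_mono_sets) (auto simp: I_def intro: sigma_sets.Basic split: bool.split)
qed

lemma (in prob_space) distr_pair_eq_pair_measure:
  assumes "random_variable S X" "random_variable T Y" and indep: "indep_set \<A> \<B>"
    and "\<And>A. A \<in> sets S \<Longrightarrow> X -` A \<inter> space M \<in> \<A>" "\<And>B. B \<in> sets T \<Longrightarrow> Y -` B \<inter> space M \<in> \<B>"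
  shows "distr M S X \<Otimes>\<^sub>M distr M T Y = distr M (S \<Otimes>\<^sub>M T) (\<lambda>\<omega>. (X \<omega>, Y \<omega>))"
proof -
  interpret SX: prob_space "distr M S X" by (rule prob_space_distr) fact
  interpret TY: prob_space "distr M T Y" by (rule prob_space_distr) fact
  show ?thesis
  proof (rule pair_measure_eqI)
    fix A B assume A: "A \<in> sets (distr M S X)" and B: "B \<in> sets (distr M T Y)"
    have "prob ((X -` A \<inter> space M) \<inter> (Y -` B \<inter> space M)) = prob (X -` A \<inter> space M) * prob (Y -` B \<inter> space M)"
      using A B assms by (intro indep_setD[OF indep]) auto
    moreover have "(\<lambda>\<omega>. (X \<omega>, Y \<omega>)) -` (A \<times> B) \<inter> space M = (X -` A \<inter> space M) \<inter> (Y -` B \<inter> space M)"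
      by auto
    ultimately show "emeasure (distr M S X) A * emeasure (distr M T Y) B
        = emeasure (distr M (S \<Otimes>\<^sub>M T) (\<lambda>\<omega>. (X \<omega>, Y \<omega>))) (A \<times> B)"
      using A B assms by (simp add: emeasure_distr emeasure_eq_measure ennreal_mult measurable_Pair)
  qed (simp_all add: SX.sigma_finite_measure_axioms TY.sigma_finite_measure_axioms)
qed

lemma (in prob_space) nn_integral_indep_pair:
  assumes indep: "indep_sets F K" and Int_stable: "\<And>i. i \<in> K \<Longrightarrow> Int_stable (F i)"
    and "k \<in> K" "J \<subseteq> K" "k \<notin> J"
    and F_k: "F k = {X -` A \<inter> space M | A. A \<in> sets S}" and X[measurable]: "random_variable S X"
    and Y_sigma: "Y \<in> sigma (space M) (\<Union>i\<in>J. F i) \<rightarrow>\<^sub>M T"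
    and f[measurable]: "f \<in> borel_measurable (S \<Otimes>\<^sub>M T)"
  shows "(\<integral>\<^sup>+\<omega>. f (X \<omega>, Y \<omega>) \<partial>M) = (\<integral>\<^sup>+x. (\<integral>\<^sup>+y. f (x, y) \<partial>distr M T Y) \<partial>distr M S X)"
proof -
  let ?\<Sigma> = "sigma_sets (space M) (\<Union>i\<in>J. F i)"
  have "(\<Union>i\<in>J. F i) \<subseteq> events"
    using indep \<open>J \<subseteq> K\<close> by (auto simp: indep_sets_def)
  then have \<Sigma>_events: "?\<Sigma> \<subseteq> events"
    by (rule sets.sigma_sets_subset)
  have UN_space: "(\<Union>i\<in>J. F i) \<subseteq> Pow (space M)"
    using \<open>(\<Union>i\<in>J. F i) \<subseteq> events\<close> sets.sets_into_space by blast
  have Y_vimage: "Y -` B \<inter> space M \<in> ?\<Sigma>" if "B \<in> sets T" for B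
    using measurable_sets[OF Y_sigma that] UN_space by (simp add: space_measure_of_conv sets_measure_of_conv)
  have Y[measurable]: "random_variable T Y"
    using Y_sigma Y_vimage \<Sigma>_events by (intro measurableI) (auto simp: measurable_def space_measure_of_conv)
  interpret TY: prob_space "distr M T Y" by (rule prob_space_distr) simp
  have "(\<integral>\<^sup>+\<omega>. f (X \<omega>, Y \<omega>) \<partial>M) = (\<integral>\<^sup>+z. f z \<partial>(distr M S X \<Otimes>\<^sub>M distr M T Y))"
    using indep_set_sigma_sets_UN[OF indep Int_stable \<open>k \<in> K\<close> \<open>J \<subseteq> K\<close> \<open>k \<notin> J\<close>] F_k Y_vimage
    by (subst distr_pair_eq_pair_measure[where \<B>="?\<Sigma>"]) (auto simp: nn_integral_distr)
  also have "\<dots> = (\<integral>\<^sup>+x. (\<integral>\<^sup>+y. f (x, y) \<partial>distr M T Y) \<partial>distr M S X)"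
    by (rule TY.nn_integral_fst[symmetric]) simp
  finally show ?thesis .
qed

lemma (in prob_space) nn_integral_indep4:
  fixes X0 :: "'a \<Rightarrow> 'b" and X1 :: "'a \<Rightarrow> 'c" and X2 :: "'a \<Rightarrow> 'd" and X3 :: "'a \<Rightarrow> 'e"
  assumes indep: "indep_sets
        (\<lambda>i::nat. if i = 0 then {X0 -` B \<inter> space M | B. B \<in> sets N0}
                  else if i = 1 then {X1 -` B \<inter> space M | B. B \<in> sets N1}
                  else if i = 2 then {X2 -` B \<inter> space M | B. B \<in> sets N2}
                  else {X3 -` B \<inter> space M | B. B \<in> sets N3})
        {0, 1, 2, 3}"
    and [measurable]: "random_variable N0 X0" "random_variable N1 X1" "random_variable N2 X2" "random_variable N3 X3"
    and f[measurable]: "f \<in> borel_measurable (N0 \<Otimes>\<^sub>M N3 \<Otimes>\<^sub>M N1 \<Otimes>\<^sub>M N2)"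
  shows "(\<integral>\<^sup>+\<omega>. f (X0 \<omega>, X3 \<omega>, X1 \<omega>, X2 \<omega>) \<partial>M)
    = (\<integral>\<^sup>+x0. (\<integral>\<^sup>+x3. (\<integral>\<^sup>+x1. (\<integral>\<^sup>+x2. f (x0, x3, x1, x2)
        \<partial>distr M N2 X2) \<partial>distr M N1 X1) \<partial>distr M N3 X3) \<partial>distr M N0 X0)"
proof -
  define F where "F = (\<lambda>i::nat. if i = 0 then {X0 -` B \<inter> space M | B. B \<in> sets N0}
                  else if i = 1 then {X1 -` B \<inter> space M | B. B \<in> sets N1}
                  else if i = 2 then {X2 -` B \<inter> space M | B. B \<in> sets N2}
                  else {X3 -` B \<inter> space M | B. B \<in> sets N3})"
  have Int_stable: "Int_stable (F i)" for i
    unfolding F_def by (simp add: Int_stable_vimages)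
  have UN_space: "(\<Union>i\<in>J. F i) \<subseteq> Pow (space M)" for J
    by (auto simp: F_def)
  have sigma_UN: "X \<in> sigma (space M) (\<Union>i\<in>J. F i) \<rightarrow>\<^sub>M N"
    if "j \<in> J" "F j = {X -` B \<inter> space M | B. B \<in> sets N}" "random_variable N X" for X :: "'a \<Rightarrow> 'z" and j J N
    using that by (intro measurable_sigmaI[OF UN_space]) (auto intro!: sigma_sets.Basic dest: measurable_space)
  note pair = nn_integral_indep_pair[OF indep[folded F_def] Int_stable]
  have X2: "X2 \<in> sigma (space M) (\<Union>i\<in>{2}. F i) \<rightarrow>\<^sub>M N2"
    by (rule sigma_UN[of 2]) (auto simp: F_def)
  have X12: "(\<lambda>\<omega>. (X1 \<omega>, X2 \<omega>)) \<in> sigma (space M) (\<Union>i\<in>{1, 2}. F i) \<rightarrow>\<^sub>M N1 \<Otimes>\<^sub>M N2"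
    by (intro measurable_Pair sigma_UN[of 1] sigma_UN[of 2]) (auto simp: F_def)
  have X312: "(\<lambda>\<omega>. (X3 \<omega>, X1 \<omega>, X2 \<omega>)) \<in> sigma (space M) (\<Union>i\<in>{1, 2, 3}. F i) \<rightarrow>\<^sub>M N3 \<Otimes>\<^sub>M N1 \<Otimes>\<^sub>M N2"
    by (intro measurable_Pair sigma_UN[of 3] sigma_UN[of 1] sigma_UN[of 2]) (auto simp: F_def)
  have F_simps: "F 0 = {X0 -` B \<inter> space M | B. B \<in> sets N0}" "F 1 = {X1 -` B \<inter> space M | B. B \<in> sets N1}"
    "F 3 = {X3 -` B \<inter> space M | B. B \<in> sets N3}"
    by (simp_all add: F_def)
  have "(\<integral>\<^sup>+\<omega>. f (X0 \<omega>, X3 \<omega>, X1 \<omega>, X2 \<omega>) \<partial>M)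
      = (\<integral>\<^sup>+x0. (\<integral>\<^sup>+y. f (x0, y) \<partial>distr M (N3 \<Otimes>\<^sub>M N1 \<Otimes>\<^sub>M N2) (\<lambda>\<omega>. (X3 \<omega>, X1 \<omega>, X2 \<omega>))) \<partial>distr M N0 X0)"
    by (rule pair[OF _ _ _ F_simps(1) _ X312]) auto
  also have "\<dots> = (\<integral>\<^sup>+x0. (\<integral>\<^sup>+x3. (\<integral>\<^sup>+y. f (x0, x3, y) \<partial>distr M (N1 \<Otimes>\<^sub>M N2) (\<lambda>\<omega>. (X1 \<omega>, X2 \<omega>)))
        \<partial>distr M N3 X3) \<partial>distr M N0 X0)"
    by (intro nn_integral_cong)
       (simp add: nn_integral_distr pair[where f="\<lambda>z. f (_, z)", OF _ _ _ F_simps(3) _ X12])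
  also have "\<dots> = (\<integral>\<^sup>+x0. (\<integral>\<^sup>+x3. (\<integral>\<^sup>+x1. (\<integral>\<^sup>+x2. f (x0, x3, x1, x2)
        \<partial>distr M N2 X2) \<partial>distr M N1 X1) \<partial>distr M N3 X3) \<partial>distr M N0 X0)"
    by (intro nn_integral_cong)
       (simp add: nn_integral_distr pair[where f="\<lambda>z. f (_, _, z)", OF _ _ _ F_simps(2) _ X2])
  finally show ?thesis .
qed

lemma (in prob_space) exponential_distributed_AE_pos:
  assumes X: "distributed M lborel X (exponential_density l)" and "l > 0"
  shows "AE x in distr M borel X. 0 < x"
proof -
  have [measurable]: "X \<in> borel_measurable M"
    using distributed_measurable[OF X] by simp
  have "\<P>(\<omega> in M. X \<omega> \<le> 0) = 0"
    using exponential_distributedD_le[OF X order.refl \<open>l > 0\<close>] by simp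
  then have "AE \<omega> in M. 0 < X \<omega>"
    by (intro AE_I'[of "{\<omega> \<in> space M. X \<omega> \<le> 0}"]) (auto simp: emeasure_eq_measure null_sets_def not_less)
  then show ?thesis
    by (subst AE_distr_iff) simp_all
qed

lemma (in prob_space) exponential_distributed_emeasure_greaterThan:
  assumes X: "distributed M lborel X (exponential_density l)" and "l > 0" "a \<ge> 0"
  shows "emeasure (distr M borel X) {a<..} = exp (- a * l)"
proof -
  have [measurable]: "X \<in> borel_measurable M"
    using distributed_measurable[OF X] by simp
  have "emeasure (distr M borel X) {a<..} = emeasure M {\<omega> \<in> space M. a < X \<omega>}"
    by (subst emeasure_distr) (auto intro!: arg_cong[where f="emeasure M"])
  also have "\<dots> = exp (- a * l)"
    using exponential_distributedD_gt[OF X \<open>a \<ge> 0\<close> \<open>l > 0\<close>] by (simp add: emeasure_eq_measure)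
  finally show ?thesis .
qed

lemma (in prob_space) nn_integral_prob_vimage:
  assumes [measurable]: "(\<lambda>(s, \<omega>). Y s \<omega>) \<in> borel_measurable (lborel \<Otimes>\<^sub>M M)"
    and [measurable]: "A \<in> sets borel" "S \<in> sets borel"
  shows "(\<integral>\<^sup>+s\<in>S. ennreal (prob {\<omega> \<in> space M. Y s \<omega> \<in> A}) \<partial>lborel)
    = (\<integral>\<^sup>+\<omega>. (\<integral>\<^sup>+s\<in>S. indicator A (Y s \<omega>) \<partial>lborel) \<partial>M)"
proof -
  interpret pair_sigma_finite lborel M ..
  have [measurable]: "Y s \<in> borel_measurable M" for s
  proof -
    have "(\<lambda>\<omega>. (\<lambda>(s, \<omega>). Y s \<omega>) (s, \<omega>)) \<in> borel_measurable M"
      by measurable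
    then show ?thesis by simp
  qed
  have "emeasure M {\<omega> \<in> space M. Y s \<omega> \<in> A} = (\<integral>\<^sup>+\<omega>. indicator {\<omega> \<in> space M. Y s \<omega> \<in> A} \<omega> \<partial>M)" for s
    by (rule nn_integral_indicator[symmetric]) measurable
  also have "\<dots> s = (\<integral>\<^sup>+\<omega>. indicator A (Y s \<omega>) \<partial>M)" for s
    by (intro nn_integral_cong) (auto split: split_indicator)
  finally show ?thesis
    by (simp add: emeasure_eq_measure nn_integral_multc[symmetric] Fubini'[symmetric])
qed

section \<open>The law \<open>Q/\<parallel>\<sigma>\<parallel>\<close> and the Levy measure\<close>

lemma Qnormalized_eq_density_bind:
  fixes \<sigma> :: "'a::euclidean_space measure" and Qk :: "'a \<Rightarrow> real measure"
  assumes sets_\<sigma>[measurable_cong]: "sets \<sigma> = sets borel"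
    and "finite_measure \<sigma>" and "emeasure \<sigma> (space \<sigma>) \<noteq> 0"
    and Qk[measurable]: "Qk \<in> \<sigma> \<rightarrow>\<^sub>M subprob_algebra borel"
  shows "Qnormalized \<sigma> Qk = density (\<sigma> \<bind> (\<lambda>u. distr (Qk u) borel (\<lambda>s. s *\<^sub>R u)))
      (\<lambda>_. ennreal (1 / measure \<sigma> (space \<sigma>)))" (is "_ = density (\<sigma> \<bind> ?K) _")
proof -
  interpret finite_measure \<sigma> by fact
  define ns where "ns = measure \<sigma> (space \<sigma>)"
  have "ns > 0"
    using assms by (simp add: ns_def emeasure_eq_measure zero_less_measure_iff)
  have space_\<sigma>: "space \<sigma> = UNIV"
    using sets_eq_imp_space_eq[OF sets_\<sigma>] by simp
  have sets_Qk: "sets (Qk u) = sets borel" for u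
    using measurable_space[OF Qk] space_\<sigma> by (auto simp: space_subprob_algebra)
  have K[measurable]: "?K \<in> \<sigma> \<rightarrow>\<^sub>M subprob_algebra borel"
    by (rule measurable_distr2[where f="\<lambda>u s. s *\<^sub>R u"]) measurable
  have sets_bind: "sets (\<sigma> \<bind> ?K) = sets borel"
    by (rule sets_bind[OF sets_kernel[OF K]]) (use space_\<sigma> in auto)
  let ?N = "density (\<sigma> \<bind> ?K) (\<lambda>_. ennreal (1 / ns))"
  have "?N = measure_of (space ?N) (sets ?N) (emeasure ?N)"
    by (rule measure_of_of_measure[symmetric])
  also have "\<dots> = measure_of UNIV (sets borel) (emeasure ?N)"
    using sets_eq_imp_space_eq[OF sets_bind] by (simp add: sets_bind)
  also have "\<dots> = Qnormalized \<sigma> Qk"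
    unfolding Qnormalized_def ns_def[symmetric]
  proof (rule measure_of_eq)
    fix A assume "A \<in> sigma_sets UNIV (sets (borel :: 'a measure))"
    then have A[measurable]: "A \<in> sets borel"
      using sets.sigma_sets_eq[of "borel :: 'a measure"] by simp
    have "emeasure ?N A = ennreal (1 / ns) * emeasure (\<sigma> \<bind> ?K) A"
      using sets_bind by (simp add: emeasure_density nn_integral_cmult_indicator)
    also have "emeasure (\<sigma> \<bind> ?K) A = (\<integral>\<^sup>+u. emeasure (?K u) A \<partial>\<sigma>)"
      by (rule emeasure_bind[where N=borel]) (use space_\<sigma> in auto)
    also have "\<dots> = Qfun \<sigma> Qk A"
      unfolding Qfun_def
    proof (rule nn_integral_cong)
      fix u
      have "emeasure (?K u) A = (\<integral>\<^sup>+x. indicator A x \<partial>?K u)"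
        by (simp add: nn_integral_indicator)
      also have "\<dots> = (\<integral>\<^sup>+s. indicator A (s *\<^sub>R u) \<partial>Qk u)"
        by (rule nn_integral_distr) (simp_all add: measurable_cong_sets[OF sets_Qk refl])
      finally show "emeasure (?K u) A = (\<integral>\<^sup>+s. indicator A (s *\<^sub>R u) \<partial>Qk u)" .
    qed
    finally show "emeasure ?N A = Qfun \<sigma> Qk A / ennreal ns"
      using \<open>ns > 0\<close> by (simp add: divide_ennreal_def inverse_ennreal mult.commute inverse_eq_divide)
  qed simp
  finally show ?thesis by (simp add: ns_def)
qed

lemma nn_integral_Qnormalized:
  fixes \<sigma> :: "'a::euclidean_space measure" and Qk :: "'a \<Rightarrow> real measure"
  assumes sets_\<sigma>[measurable_cong]: "sets \<sigma> = sets borel"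
    and "finite_measure \<sigma>" and "emeasure \<sigma> (space \<sigma>) \<noteq> 0"
    and Qk[measurable]: "Qk \<in> \<sigma> \<rightarrow>\<^sub>M subprob_algebra borel"
    and F[measurable]: "F \<in> borel_measurable borel"
  shows "(\<integral>\<^sup>+v. F v \<partial>Qnormalized \<sigma> Qk)
       = ennreal (1 / measure \<sigma> (space \<sigma>)) * (\<integral>\<^sup>+u. (\<integral>\<^sup>+s. F (s *\<^sub>R u) \<partial>Qk u) \<partial>\<sigma>)"
proof -
  define K where "K u = distr (Qk u) borel (\<lambda>s. s *\<^sub>R u)" for u
  have space_\<sigma>: "space \<sigma> = UNIV"
    using sets_eq_imp_space_eq[OF sets_\<sigma>] by simp
  have sets_Qk: "sets (Qk u) = sets borel" for u
    using measurable_space[OF Qk] space_\<sigma> by (auto simp: space_subprob_algebra)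
  have K[measurable]: "K \<in> \<sigma> \<rightarrow>\<^sub>M subprob_algebra borel"
    unfolding K_def by (rule measurable_distr2[where f="\<lambda>u s. s *\<^sub>R u"]) measurable
  have sets_bind: "sets (\<sigma> \<bind> K) = sets borel"
    by (rule sets_bind[OF sets_kernel[OF K]]) (use space_\<sigma> in auto)
  have "(\<integral>\<^sup>+v. F v \<partial>Qnormalized \<sigma> Qk) = ennreal (1 / measure \<sigma> (space \<sigma>)) * (\<integral>\<^sup>+v. F v \<partial>(\<sigma> \<bind> K))"
    using assms unfolding K_def
    by (simp add: Qnormalized_eq_density_bind nn_integral_density nn_integral_cmult
        measurable_cong_sets[OF sets_bind[unfolded K_def] refl])
  also have "(\<integral>\<^sup>+v. F v \<partial>(\<sigma> \<bind> K)) = (\<integral>\<^sup>+u. (\<integral>\<^sup>+v. F v \<partial>K u) \<partial>\<sigma>)"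
    by (rule nn_integral_bind[OF F K])
  also have "\<dots> = (\<integral>\<^sup>+u. (\<integral>\<^sup>+s. F (s *\<^sub>R u) \<partial>Qk u) \<partial>\<sigma>)"
    unfolding K_def by (intro nn_integral_cong nn_integral_distr) (simp_all add: measurable_cong_sets[OF sets_Qk refl])
  finally show ?thesis .
qed

lemma nn_integral_exp_eq_qlap:
  assumes "prob_space (Qk u)" "sets (Qk u) = sets borel" "AE s in Qk u. s > 0" "x \<ge> 0"
  shows "(\<integral>\<^sup>+s. ennreal (exp (- x * s)) \<partial>Qk u) = ennreal (qlap Qk x u)"
proof -
  interpret prob_space "Qk u" by fact
  have "integrable (Qk u) (\<lambda>s. exp (- x * s))"
  proof (rule integrable_const_bound[where B=1])
    show "AE s in Qk u. norm (exp (- x * s)) \<le> 1"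
      using assms(3) by eventually_elim (use \<open>x \<ge> 0\<close> in simp)
  qed (simp add: measurable_cong_sets[OF assms(2) refl])
  then show ?thesis
    unfolding qlap_def by (intro nn_integral_eq_integral) auto
qed

lemma nn_integral_radial_Fubini:
  fixes Q :: "real measure" and u :: "'a::euclidean_space"
  assumes "prob_space Q" and sets_Q[measurable_cong]: "sets Q = sets borel" and Q_pos: "AE s in Q. s > 0" and "c \<ge> 0"
    and [measurable]: "A \<in> sets borel"
    and F_radial: "\<And>s. s > 0 \<Longrightarrow> F s = (\<integral>\<^sup>+r. indicator A (r *\<^sub>R u) * ennreal (exp (- s * r powr p))
      * ennreal (c * r powr (- \<alpha> - 1)) * indicator {0<..} r \<partial>lborel)"
  shows "(\<integral>\<^sup>+s. F s \<partial>Q) = ennreal c * (\<integral>\<^sup>+r. indicator A (r *\<^sub>R u) * ennreal (r powr (- \<alpha> - 1))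
      * indicator {0<..} r * (\<integral>\<^sup>+s. ennreal (exp (- (r powr p) * s)) \<partial>Q) \<partial>lborel)"
proof -
  interpret Q: prob_space Q by fact
  interpret pair_sigma_finite Q lborel ..
  define g where "g r = indicator A (r *\<^sub>R u) * ennreal (r powr (- \<alpha> - 1)) * indicator {0<..} r" for r
  have [measurable]: "g \<in> borel_measurable borel"
    unfolding g_def by measurable
  have "(\<integral>\<^sup>+s. F s \<partial>Q) = (\<integral>\<^sup>+s. (\<integral>\<^sup>+r. ennreal c * g r * ennreal (exp (- (r powr p) * s)) \<partial>lborel) \<partial>Q)"
    using Q_pos \<open>c \<ge> 0\<close>
    by (intro nn_integral_cong_AE) (auto simp: F_radial g_def ennreal_mult mult_ac intro!: nn_integral_cong)
  also have "\<dots> = (\<integral>\<^sup>+r. (\<integral>\<^sup>+s. ennreal c * g r * ennreal (exp (- (r powr p) * s)) \<partial>Q) \<partial>lborel)"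
    by (rule Fubini'[symmetric, of "\<lambda>s r. ennreal c * g r * ennreal (exp (- (r powr p) * s))"])
      (simp add: measurable_cong_sets[OF sets_pair_measure_cong[OF sets_Q refl] refl])
  also have "\<dots> = (\<integral>\<^sup>+r. ennreal c * (g r * (\<integral>\<^sup>+s. ennreal (exp (- (r powr p) * s)) \<partial>Q)) \<partial>lborel)"
    by (simp add: nn_integral_cmult mult.assoc)
  also have "\<dots> = ennreal c * (\<integral>\<^sup>+r. g r * (\<integral>\<^sup>+s. ennreal (exp (- (r powr p) * s)) \<partial>Q) \<partial>lborel)"
    by (rule nn_integral_cmult) measurable
  finally show ?thesis
    by (simp add: g_def)
qed

lemma nn_integral_Qnormalized_eq_levyM:
  fixes \<sigma> :: "'a::euclidean_space measure" and Qk :: "'a \<Rightarrow> real measure" and F :: "'a \<Rightarrow> ennreal"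
  assumes sets_\<sigma>[measurable_cong]: "sets \<sigma> = sets borel" and "finite_measure \<sigma>"
    and \<sigma>_sphere: "emeasure \<sigma> (UNIV - sphere 0 1) = 0" and "emeasure \<sigma> (space \<sigma>) \<noteq> 0"
    and Qk[measurable]: "Qk \<in> \<sigma> \<rightarrow>\<^sub>M subprob_algebra borel"
    and Qk_prob: "\<And>u. u \<in> sphere 0 1 \<Longrightarrow> prob_space (Qk u)"
    and Qk_pos: "\<And>u. u \<in> sphere 0 1 \<Longrightarrow> emeasure (Qk u) {..0} = 0"
    and [measurable]: "A \<in> sets borel" and "c \<ge> 0"
    and F[measurable]: "F \<in> borel_measurable borel"
    and F_radial: "\<And>u s. u \<in> sphere 0 1 \<Longrightarrow> s > 0 \<Longrightarrow> F (s *\<^sub>R u)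
      = (\<integral>\<^sup>+r. indicator A (r *\<^sub>R u) * ennreal (exp (- s * r powr p)) * ennreal (c * r powr (- \<alpha> - 1))
          * indicator {0<..} r \<partial>lborel)"
  shows "(\<integral>\<^sup>+v. F v \<partial>Qnormalized \<sigma> Qk) = ennreal (c / measure \<sigma> (space \<sigma>)) * levyM \<sigma> Qk p \<alpha> A"
proof -
  have space_\<sigma>: "space \<sigma> = UNIV"
    using sets_eq_imp_space_eq[OF sets_\<sigma>] by simp
  have sets_Qk: "sets (Qk u) = sets borel" for u
    using measurable_space[OF Qk] space_\<sigma> by (auto simp: space_subprob_algebra)
  have Qk_AE_pos: "AE s in Qk u. s > 0" if "u \<in> sphere 0 1" for u
    by (rule AE_I'[of "{..0}"]) (auto simp: null_sets_def Qk_pos[OF that] sets_Qk)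
  define J where "J x = (\<integral>\<^sup>+s. ennreal (exp (- (snd x powr p) * s)) \<partial>Qk (fst x))" for x :: "'a \<times> real"
  have [measurable]: "J \<in> borel_measurable (\<sigma> \<Otimes>\<^sub>M lborel)"
    unfolding J_def by (rule nn_integral_measurable_subprob_algebra2[where N=borel]) measurable
  define L where "L u = (\<integral>\<^sup>+r. indicator A (r *\<^sub>R u) * ennreal (r powr (- \<alpha> - 1)) * indicator {0<..} r * J (u, r) \<partial>lborel)" for u
  have [measurable]: "L \<in> borel_measurable \<sigma>"
    unfolding L_def by measurable
  have "AE u in \<sigma>. u \<in> sphere 0 1"
    by (rule AE_I'[of "UNIV - sphere 0 1"]) (auto simp: null_sets_def sets_\<sigma> \<sigma>_sphere)
  then have "AE u in \<sigma>. (\<integral>\<^sup>+s. F (s *\<^sub>R u) \<partial>Qk u) = ennreal c * L u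
      \<and> L u = (\<integral>\<^sup>+ r\<in>{0<..}. indicator A (r *\<^sub>R u) * ennreal (qlap Qk (r powr p) u * r powr (- \<alpha> - 1)) \<partial>lborel)"
  proof eventually_elim
    case (elim u)
    have "J (u, r) = ennreal (qlap Qk (r powr p) u)" for r
      unfolding J_def fst_conv snd_conv using Qk_prob[OF elim] Qk_AE_pos[OF elim] sets_Qk
      by (intro nn_integral_exp_eq_qlap) auto
    then show ?case
      unfolding L_def
      using nn_integral_radial_Fubini[OF Qk_prob[OF elim] sets_Qk Qk_AE_pos[OF elim] \<open>c \<ge> 0\<close> \<open>A \<in> sets borel\<close>
          F_radial[OF elim]]
      by (auto simp: J_def ennreal_mult qlap_def mult_ac intro!: nn_integral_cong)
  qed
  then have radial: "AE u in \<sigma>. (\<integral>\<^sup>+s. F (s *\<^sub>R u) \<partial>Qk u) = ennreal c * L u"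
    and levy: "AE u in \<sigma>. L u = (\<integral>\<^sup>+ r\<in>{0<..}. indicator A (r *\<^sub>R u)
        * ennreal (qlap Qk (r powr p) u * r powr (- \<alpha> - 1)) \<partial>lborel)"
    by auto
  have "(\<integral>\<^sup>+v. F v \<partial>Qnormalized \<sigma> Qk) = ennreal (1 / measure \<sigma> (space \<sigma>)) * (\<integral>\<^sup>+u. ennreal c * L u \<partial>\<sigma>)"
    using assms radial by (simp add: nn_integral_Qnormalized cong: nn_integral_cong_AE)
  also have "(\<integral>\<^sup>+u. ennreal c * L u \<partial>\<sigma>) = ennreal c * levyM \<sigma> Qk p \<alpha> A"
    using levy unfolding levyM_def by (simp add: nn_integral_cmult cong: nn_integral_cong_AE)
  finally show ?thesis
    using \<open>c \<ge> 0\<close> by (simp add: ennreal_mult[symmetric] mult.assoc[symmetric])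
qed

lemma nn_integral_Hfun_eq_levyM:
  fixes \<sigma> :: "'a::euclidean_space measure" and Qk :: "'a \<Rightarrow> real measure" and E :: "real measure"
  assumes "sets \<sigma> = sets borel" "finite_measure \<sigma>" "emeasure \<sigma> (UNIV - sphere 0 1) = 0"
    and \<sigma>_nonzero: "emeasure \<sigma> (space \<sigma>) \<noteq> 0"
    and "Qk \<in> \<sigma> \<rightarrow>\<^sub>M subprob_algebra borel" "\<And>u. u \<in> sphere 0 1 \<Longrightarrow> prob_space (Qk u)"
      "\<And>u. u \<in> sphere 0 1 \<Longrightarrow> emeasure (Qk u) {..0} = 0"
    and E: "prob_space E" "sets E = sets borel" "AE e in E. e > 0" "\<And>x. x \<ge> 0 \<Longrightarrow> emeasure E {x<..} = exp (- x)"
    and [measurable]: "A \<in> sets borel" and "T > 0" "\<alpha> > 0" "p > 0"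
  shows "(\<integral>\<^sup>+v. (\<integral>\<^sup>+e. (\<integral>\<^sup>+u. (\<integral>\<^sup>+s\<in>{0<..}. indicator A (Hfun \<alpha> p T (measure \<sigma> (space \<sigma>)) s v e u) \<partial>lborel)
      \<partial>uniform_measure lborel {0<..<1}) \<partial>E) \<partial>Qnormalized \<sigma> Qk) = ennreal T * levyM \<sigma> Qk p \<alpha> A"
proof -
  define ns where "ns = measure \<sigma> (space \<sigma>)"
  have "ns > 0"
    using \<open>finite_measure \<sigma>\<close> \<sigma>_nonzero
    by (simp add: ns_def finite_measure.emeasure_eq_measure zero_less_measure_iff)
  interpret E: prob_space E by fact
  interpret U: prob_space "uniform_measure lborel {0<..<1::real}"
    by (rule prob_space_uniform_measure) auto
  have [measurable_cong]: "sets E = sets borel" "sets (uniform_measure lborel {0<..<1::real}) = sets borel"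
    using E by simp_all
  have "(\<integral>\<^sup>+v. (\<integral>\<^sup>+e. (\<integral>\<^sup>+u. (\<integral>\<^sup>+s\<in>{0<..}. indicator A (Hfun \<alpha> p T ns s v e u) \<partial>lborel)
      \<partial>uniform_measure lborel {0<..<1}) \<partial>E) \<partial>Qnormalized \<sigma> Qk) = ennreal (ns * T / ns) * levyM \<sigma> Qk p \<alpha> A"
    unfolding ns_def
  proof (rule nn_integral_Qnormalized_eq_levyM)
    fix u :: 'a and s :: real
    assume "u \<in> sphere 0 1" "s > 0"
    then have norm_su: "norm (s *\<^sub>R u) = s" and dir_su: "(s *\<^sub>R u) /\<^sub>R s = u" and "s *\<^sub>R u \<noteq> 0"
      by auto
    have "(\<integral>\<^sup>+e. (\<integral>\<^sup>+u'. (\<integral>\<^sup>+s'\<in>{0<..}. indicator A (Hfun \<alpha> p T ns s' (s *\<^sub>R u) e u') \<partial>lborel)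
        \<partial>uniform_measure lborel {0<..<1}) \<partial>E)
      = (\<integral>\<^sup>+r. indicator A (r *\<^sub>R ((s *\<^sub>R u) /\<^sub>R norm (s *\<^sub>R u))) * ennreal (exp (- norm (s *\<^sub>R u) * r powr p))
          * ennreal (ns * T * r powr (- \<alpha> - 1)) * indicator {0<..} r \<partial>lborel)"
      using \<open>ns > 0\<close> \<open>T > 0\<close> \<open>s *\<^sub>R u \<noteq> 0\<close> \<open>\<alpha> > 0\<close> \<open>p > 0\<close> E
      by (intro nn_integral_Hfun_fixed_vector) auto
    then show "(\<integral>\<^sup>+e. (\<integral>\<^sup>+u'. (\<integral>\<^sup>+s'\<in>{0<..}. indicator A (Hfun \<alpha> p T (measure \<sigma> (space \<sigma>)) s' (s *\<^sub>R u) e u')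
        \<partial>lborel) \<partial>uniform_measure lborel {0<..<1}) \<partial>E)
      = (\<integral>\<^sup>+r. indicator A (r *\<^sub>R u) * ennreal (exp (- s * r powr p))
          * ennreal (measure \<sigma> (space \<sigma>) * T * r powr (- \<alpha> - 1)) * indicator {0<..} r \<partial>lborel)"
      unfolding norm_su dir_su ns_def .
  qed (use assms \<open>ns > 0\<close> in \<open>simp_all add: ns_def Hfun_def\<close>)
  then show ?thesis
    using \<open>ns > 0\<close> by (simp add: ns_def)
qed

lemma emeasure_uniform_Ioo_Ioc:
  fixes t T :: real
  assumes "T > 0" "0 \<le> t" "t \<le> T"
  shows "emeasure (uniform_measure lborel {0<..<T}) {0<..t} = ennreal (t / T)"
proof -
  have "{0<..<T} \<inter> {0<..t} = {0<..t} - (if t = T then {T} else {})"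
    using \<open>t \<le> T\<close> by auto
  then show ?thesis
    using assms by (simp add: divide_ennreal emeasure_Diff)
qed

lemma (in prob_space) nn_integral_prob_uniform_thinning:
  fixes T1 E1 U1 :: "'a \<Rightarrow> real" and V1 :: "'a \<Rightarrow> 'b::euclidean_space"
    and H :: "real \<times> 'b \<times> real \<times> real \<Rightarrow> 'c::euclidean_space"
  assumes indep: "indep_sets
        (\<lambda>i::nat. if i = 0 then {T1 -` B \<inter> space M | B. B \<in> sets (borel :: real measure)}
                  else if i = 1 then {E1 -` B \<inter> space M | B. B \<in> sets (borel :: real measure)}
                  else if i = 2 then {U1 -` B \<inter> space M | B. B \<in> sets (borel :: real measure)}
                  else {V1 -` B \<inter> space M | B. B \<in> sets (borel :: 'b measure)})
        {0, 1, 2, 3}"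
    and [measurable]: "T1 \<in> borel_measurable M" "E1 \<in> borel_measurable M" "U1 \<in> borel_measurable M"
      "V1 \<in> borel_measurable M"
    and T1_law: "distr M borel T1 = uniform_measure lborel {0<..<T}" and "T > 0" "0 \<le> t" "t \<le> T"
    and [measurable]: "H \<in> borel_measurable (borel \<Otimes>\<^sub>M borel \<Otimes>\<^sub>M borel \<Otimes>\<^sub>M borel)"
    and [measurable]: "A \<in> sets borel" and "0 \<notin> A"
  shows "(\<integral>\<^sup>+s\<in>{0<..}. ennreal (prob {\<omega> \<in> space M.
            indicator {0<..t} (T1 \<omega>) *\<^sub>R H (s, V1 \<omega>, E1 \<omega>, U1 \<omega>) \<in> A}) \<partial>lborel)
    = ennreal (t / T) * (\<integral>\<^sup>+v. (\<integral>\<^sup>+e. (\<integral>\<^sup>+u. (\<integral>\<^sup>+s\<in>{0<..}. indicator A (H (s, v, e, u)) \<partial>lborel)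
        \<partial>distr M borel U1) \<partial>distr M borel E1) \<partial>distr M borel V1)"
proof -
  define \<Phi> where "\<Phi> x = (\<integral>\<^sup>+s\<in>{0<..}. indicator A (H (s, x)) \<partial>lborel)" for x
  have [measurable]: "\<Phi> \<in> borel_measurable (borel \<Otimes>\<^sub>M borel \<Otimes>\<^sub>M borel)"
    unfolding \<Phi>_def by measurable
  have "(\<integral>\<^sup>+s\<in>{0<..}. indicator A (indicator {0<..t} \<tau> *\<^sub>R H (s, x)) \<partial>lborel) = indicator {0<..t} \<tau> * \<Phi> x"
    for \<tau> x
    using \<open>0 \<notin> A\<close> by (simp add: \<Phi>_def split: split_indicator)
  then have "(\<integral>\<^sup>+s\<in>{0<..}. ennreal (prob {\<omega> \<in> space M.
        indicator {0<..t} (T1 \<omega>) *\<^sub>R H (s, V1 \<omega>, E1 \<omega>, U1 \<omega>) \<in> A}) \<partial>lborel)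
      = (\<integral>\<^sup>+\<omega>. indicator {0<..t} (T1 \<omega>) * \<Phi> (V1 \<omega>, E1 \<omega>, U1 \<omega>) \<partial>M)"
    by (subst nn_integral_prob_vimage) simp_all
  also have "\<dots> = (\<integral>\<^sup>+\<tau>. (\<integral>\<^sup>+v. (\<integral>\<^sup>+e. (\<integral>\<^sup>+u. indicator {0<..t} \<tau> * \<Phi> (v, e, u)
      \<partial>distr M borel U1) \<partial>distr M borel E1) \<partial>distr M borel V1) \<partial>distr M borel T1)"
    by (rule nn_integral_indep4[OF indep, where f="\<lambda>(\<tau>, x). indicator {0<..t} \<tau> * \<Phi> x", simplified])
      measurable
  also have "\<dots> = (\<integral>\<^sup>+\<tau>. indicator {0<..t} \<tau> \<partial>distr M borel T1) * (\<integral>\<^sup>+v. (\<integral>\<^sup>+e. (\<integral>\<^sup>+u. \<Phi> (v, e, u)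
      \<partial>distr M borel U1) \<partial>distr M borel E1) \<partial>distr M borel V1)"
  proof -
    interpret E: prob_space "distr M borel E1" by (rule prob_space_distr) simp
    interpret U: prob_space "distr M borel U1" by (rule prob_space_distr) simp
    have "(\<lambda>u. \<Phi> (v, e, u)) \<in> borel_measurable (distr M borel U1)"
      "(\<lambda>e. \<integral>\<^sup>+u. \<Phi> (v, e, u) \<partial>distr M borel U1) \<in> borel_measurable (distr M borel E1)"
      "(\<lambda>v. \<integral>\<^sup>+e. \<integral>\<^sup>+u. \<Phi> (v, e, u) \<partial>distr M borel U1 \<partial>distr M borel E1) \<in> borel_measurable (distr M borel V1)"
      for v e
      by measurable
    then show ?thesis
      by (simp add: nn_integral_cmult nn_integral_multc)
  qed
  also have "(\<integral>\<^sup>+\<tau>. indicator {0<..t} \<tau> \<partial>distr M borel T1) = ennreal (t / T)"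
    using \<open>T > 0\<close> \<open>0 \<le> t\<close> \<open>t \<le> T\<close> by (simp add: T1_law emeasure_uniform_Ioo_Ioc del: emeasure_uniform_measure)
  finally show ?thesis
    by (simp add: \<Phi>_def)
qed

theorem mainTheorem5:
  fixes \<sigma> :: "'a::euclidean_space measure"
    and Qk :: "'a \<Rightarrow> real measure"
    and p \<alpha> T t :: real
    and P :: "'w measure"
    and T1 E1 U1 :: "'w \<Rightarrow> real"
    and V1 :: "'w \<Rightarrow> 'a"
    and A :: "'a set"
  assumes sigma_sets: "sets \<sigma> = sets borel"
    and sigma_finite: "finite_measure \<sigma>"
    and sigma_sphere: "emeasure \<sigma> (UNIV - sphere 0 1) = 0"
    and sigma_nonzero: "emeasure \<sigma> (space \<sigma>) \<noteq> 0"
    and Qk_meas: "Qk \<in> \<sigma> \<rightarrow>\<^sub>M subprob_algebra borel"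
    and Qk_prob: "\<And>u. u \<in> sphere 0 1 \<Longrightarrow> prob_space (Qk u)"
    and Qk_pos: "\<And>u. u \<in> sphere 0 1 \<Longrightarrow> emeasure (Qk u) {..0} = 0"
    and p_pos: "p > 0"
    and alpha: "0 < \<alpha>" "\<alpha> < 2"
    and T_pos: "T > 0"
    and P: "prob_space P"
    and T1_law: "distr P borel T1 = uniform_measure lborel {0<..<T}"
    and E1_law: "distributed P lborel E1 (exponential_density 1)"
    and U1_law: "distr P borel U1 = uniform_measure lborel {0<..<1}"
    and V1_law: "distr P borel V1 = Qnormalized \<sigma> Qk"
    and T1_meas: "T1 \<in> P \<rightarrow>\<^sub>M borel"
    and U1_meas: "U1 \<in> P \<rightarrow>\<^sub>M borel"
    and V1_meas: "V1 \<in> P \<rightarrow>\<^sub>M borel"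
    and indep: "prob_space.indep_sets P
        (\<lambda>i::nat. if i = 0 then {T1 -` B \<inter> space P | B. B \<in> sets (borel :: real measure)}
                  else if i = 1 then {E1 -` B \<inter> space P | B. B \<in> sets (borel :: real measure)}
                  else if i = 2 then {U1 -` B \<inter> space P | B. B \<in> sets (borel :: real measure)}
                  else {V1 -` B \<inter> space P | B. B \<in> sets (borel :: 'a measure)})
        {0, 1, 2, 3}"
    and t: "0 \<le> t" "t \<le> T"
    and A_borel: "A \<in> sets borel"
    and A_away: "0 \<notin> closure A"
  shows "(\<integral>\<^sup>+ s\<in>{0<..}.
            ennreal (measure P {\<omega> \<in> space P.
               indicator {0<..t} (T1 \<omega>) *\<^sub>R
                 Hfun \<alpha> p T (measure \<sigma> (space \<sigma>)) s (V1 \<omega>) (E1 \<omega>) (U1 \<omega>) \<in> A}) \<partial>lborel)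
         = ennreal t * levyM \<sigma> Qk p \<alpha> A"
proof -
  interpret P: prob_space P by fact
  have [measurable]: "E1 \<in> P \<rightarrow>\<^sub>M borel"
    using distributed_measurable[OF E1_law] by simp
  have "0 \<notin> A"
    using A_away closure_subset by blast
  have "(\<integral>\<^sup>+ s\<in>{0<..}. ennreal (measure P {\<omega> \<in> space P. indicator {0<..t} (T1 \<omega>) *\<^sub>R
          Hfun \<alpha> p T (measure \<sigma> (space \<sigma>)) s (V1 \<omega>) (E1 \<omega>) (U1 \<omega>) \<in> A}) \<partial>lborel)
      = ennreal (t / T) * (\<integral>\<^sup>+v. (\<integral>\<^sup>+e. (\<integral>\<^sup>+u. (\<integral>\<^sup>+s\<in>{0<..}.
          indicator A (Hfun \<alpha> p T (measure \<sigma> (space \<sigma>)) s v e u) \<partial>lborel)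
        \<partial>distr P borel U1) \<partial>distr P borel E1) \<partial>distr P borel V1)"
    using P.nn_integral_prob_uniform_thinning[OF indep _ _ _ _ T1_law T_pos t,
        where H="\<lambda>(s, v, e, u). Hfun \<alpha> p T (measure \<sigma> (space \<sigma>)) s v e u" and A=A]
      T1_meas U1_meas V1_meas A_borel \<open>0 \<notin> A\<close>
    by (simp add: Hfun_def)
  also have "\<dots> = ennreal (t / T) * (ennreal T * levyM \<sigma> Qk p \<alpha> A)"
  proof -
    have "AE e in distr P borel E1. 0 < e"
      using P.exponential_distributed_AE_pos[OF E1_law] by simp
    moreover have "emeasure (distr P borel E1) {x<..} = exp (- x)" if "x \<ge> 0" for x
      using P.exponential_distributed_emeasure_greaterThan[OF E1_law _ that] by simp
    ultimately show ?thesis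
      using nn_integral_Hfun_eq_levyM[OF sigma_sets sigma_finite sigma_sphere sigma_nonzero Qk_meas Qk_prob Qk_pos
          P.prob_space_distr[OF \<open>E1 \<in> P \<rightarrow>\<^sub>M borel\<close>] sets_distr, of A T \<alpha> p] A_borel T_pos alpha(1) p_pos
      by (simp add: U1_law V1_law)
  qed
  also have "\<dots> = ennreal t * levyM \<sigma> Qk p \<alpha> A"
    using T_pos t by (simp add: ennreal_mult[symmetric] mult.assoc[symmetric])
  finally show ?thesis .
qed

end
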